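(* Let $\mathcal{V}$ and $\mathcal{W}$ be quaternionic two-sided Banach algebras with unit $1\neq 0$, let $\mathcal{A}:\mathcal{V}\to\mathcal{W}$ be a homomorphism, and let $a\in\mathcal{V}^{-1}$. Then $$\sigma_{S,\mathcal{A}}^{\Phi}(a^{-1})=\left\{\frac{\overline{q}}{|q|^{2}}:\ q\in \sigma_{S,\mathcal{A}}^{\Phi}(a)\right\}\quad\text{and}\quad \sigma_{S,\mathcal{A}}^{\Phi^{0}}(a^{-1})=\left\{\frac{\overline{q}}{|q|^{2}}:\ q\in \sigma_{S,\mathcal{A}}^{\Phi^{0}}(a)\right\}.$$
   Context: $\mathbb{H}$ denotes the quaternions; $\overline{q}$ is the quaternionic conjugate, $Re(q)$ the real part, $|q|$ the norm. A quaternionic two-sided Banach algebra with unit is a two-sided $\mathbb{H}$-vector space $\mathcal{V}$ with an associative product satisfying $x(y+z)=xy+xz$, $(x+y)z=xz+yz$, $q(xy)=(qx)y$, $(xy)q=x(yq)$, complete with respect to a norm with $\|qx\|=|q|\|x\|=\|xq\|$, $\|xy\|\le\|x\|\|y\|$, and with unit $1_{\mathcal{V}}$, $\|1_{\mathcal{V}}\|=1$. A homomorphism $\mathcal{A}:\mathcal{V}\to\mathcal{W}$ is additive, multiplicative, satisfies $\mathcal{A}(qu)=q\mathcal{A}(u)$, $\mathcal{A}(uq)=\mathcal{A}(u)q$ and $\mathcal{A}(1_{\mathcal{V}})=1_{\mathcal{W}}$. $\mathcal{V}^{-1}$ is the group of invertible elements. For $v\in\mathcal{V}$, $q\in\mathbb{H}$,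 $R_q(v)=v^2-2Re(q)v+|q|^21_{\mathcal{V}}$. $\Phi_{\mathcal{A}}=\{v:\mathcal{A}(v)\in\mathcal{W}^{-1}\}$, $\Phi^0_{\mathcal{A}}=\mathcal{V}^{-1}+\mathcal{A}^{-1}(0)$, $\sigma_{S,\mathcal{A}}^{\Phi}(v)=\{q\in\mathbb{H}:R_q(v)\notin\Phi_{\mathcal{A}}\}$, $\sigma_{S,\mathcal{A}}^{\Phi^0}(v)=\{q\in\mathbb{H}:R_q(v)\notin\Phi^0_{\mathcal{A}}\}$. *)

theory Defs
  imports Complex_Main
begin

datatype quat = Quat (qRe: real) (qI: real) (qJ: real) (qK: real)

definition qadd :: "quat \<Rightarrow> quat \<Rightarrow> quat" where
  "qadd p q = Quat (qRe p + qRe q) (qI p + qI q) (qJ p + qJ q) (qK p + qK q)"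

definition qmult :: "quat \<Rightarrow> quat \<Rightarrow> quat" where
  "qmult p q = Quat
     (qRe p * qRe q - qI p * qI q - qJ p * qJ q - qK p * qK q)
     (qRe p * qI q + qI p * qRe q + qJ p * qK q - qK p * qJ q)
     (qRe p * qJ q - qI p * qK q + qJ p * qRe q + qK p * qI q)
     (qRe p * qK q + qI p * qJ q - qJ p * qI q + qK p * qRe q)"

definition qreal :: "real \<Rightarrow> quat" where
  "qreal r = Quat r 0 0 0"

definition qconj :: "quat \<Rightarrow> quat" where
  "qconj q = Quat (qRe q) (- qI q) (- qJ q) (- qK q)"

definition qnorm :: "quat \<Rightarrow> real" where
  "qnorm q = sqrt ((qRe q)\<^sup>2 + (qI q)\<^sup>2 + (qJ q)\<^sup>2 + (qK q)\<^sup>2)"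

definition qconj_div_normsq :: "quat \<Rightarrow> quat" where
  "qconj_div_normsq q = (let s = (qnorm q)\<^sup>2 in
     Quat (qRe q / s) (- qI q / s) (- qJ q / s) (- qK q / s))"

text \<open>The carrier is a type 'v with its ring structure (associative product,
  distributivity, unit, 0 \<noteq> 1) from class ring_1; the left and right
  quaternionic scalar multiplications lm, rm and the norm nm are explicit.\<close>

definition qbanach_algebra ::
  "(quat \<Rightarrow> 'v::ring_1 \<Rightarrow> 'v) \<Rightarrow> ('v \<Rightarrow> quat \<Rightarrow> 'v) \<Rightarrow> ('v \<Rightarrow> real) \<Rightarrow> bool" where
  "qbanach_algebra lm rm nm \<longleftrightarrow>
     \<comment> \<open>two-sided quaternionic vector space\<close>
     (\<forall>q x y. lm q (x + y) = lm q x + lm q y) \<and>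
     (\<forall>p q x. lm (qadd p q) x = lm p x + lm q x) \<and>
     (\<forall>p q x. lm (qmult p q) x = lm p (lm q x)) \<and>
     (\<forall>x. lm (qreal 1) x = x) \<and>
     (\<forall>q x y. rm (x + y) q = rm x q + rm y q) \<and>
     (\<forall>p q x. rm x (qadd p q) = rm x p + rm x q) \<and>
     (\<forall>p q x. rm x (qmult p q) = rm (rm x p) q) \<and>
     (\<forall>x. rm x (qreal 1) = x) \<and>
     (\<forall>p q x. rm (lm p x) q = lm p (rm x q)) \<and>
     \<comment> \<open>compatibility of the product with scalars\<close>
     (\<forall>q x y. lm q (x * y) = (lm q x) * y) \<and>
     (\<forall>q x y. rm (x * y) q = x * (rm y q)) \<and>
     \<comment> \<open>norm\<close>
     (\<forall>x. nm x = 0 \<longleftrightarrow> x = 0) \<and>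
     (\<forall>x y. nm (x + y) \<le> nm x + nm y) \<and>
     (\<forall>q x. nm (lm q x) = qnorm q * nm x) \<and>
     (\<forall>q x. nm (rm x q) = qnorm q * nm x) \<and>
     (\<forall>x y. nm (x * y) \<le> nm x * nm y) \<and>
     nm 1 = 1 \<and>
     \<comment> \<open>completeness\<close>
     (\<forall>s::nat \<Rightarrow> 'v.
        (\<forall>e>0. \<exists>N. \<forall>m\<ge>N. \<forall>n\<ge>N. nm (s m - s n) < e) \<longrightarrow>
        (\<exists>l. (\<lambda>n. nm (s n - l)) \<longlonglongrightarrow> 0))"

definition qhom ::
  "(quat \<Rightarrow> 'v::ring_1 \<Rightarrow> 'v) \<Rightarrow> ('v \<Rightarrow> quat \<Rightarrow> 'v) \<Rightarrow>
   (quat \<Rightarrow> 'w::ring_1 \<Rightarrow> 'w) \<Rightarrow> ('w \<Rightarrow> quat \<Rightarrow> 'w) \<Rightarrow> ('v \<Rightarrow> 'w) \<Rightarrow> bool" where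
  "qhom lV rV lW rW A \<longleftrightarrow>
     (\<forall>u v. A (u + v) = A u + A v) \<and>
     (\<forall>u v. A (u * v) = A u * A v) \<and>
     (\<forall>q u. A (lV q u) = lW q (A u)) \<and>
     (\<forall>q u. A (rV u q) = rW (A u) q) \<and>
     A 1 = 1"

definition invertibles :: "'v::ring_1 set" where
  "invertibles = {x. \<exists>y. x * y = 1 \<and> y * x = 1}"

definition ring_inv :: "'v::ring_1 \<Rightarrow> 'v" where
  "ring_inv x = (THE y. x * y = 1 \<and> y * x = 1)"

definition Rq :: "(quat \<Rightarrow> 'v::ring_1 \<Rightarrow> 'v) \<Rightarrow> quat \<Rightarrow> 'v \<Rightarrow> 'v" where
  "Rq lm q v = v * v - lm (qreal (2 * qRe q)) v + lm (qreal ((qnorm q)\<^sup>2)) 1"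

definition Phi :: "('v::ring_1 \<Rightarrow> 'w::ring_1) \<Rightarrow> 'v set" where
  "Phi A = {v. A v \<in> invertibles}"

definition Phi0 :: "('v::ring_1 \<Rightarrow> 'w::ring_1) \<Rightarrow> 'v set" where
  "Phi0 A = {u + k | u k. u \<in> invertibles \<and> A k = 0}"

definition S_spec_Phi ::
  "(quat \<Rightarrow> 'v::ring_1 \<Rightarrow> 'v) \<Rightarrow> ('v \<Rightarrow> 'w::ring_1) \<Rightarrow> 'v \<Rightarrow> quat set" where
  "S_spec_Phi lm A v = {q. Rq lm q v \<notin> Phi A}"

definition S_spec_Phi0 ::
  "(quat \<Rightarrow> 'v::ring_1 \<Rightarrow> 'v) \<Rightarrow> ('v \<Rightarrow> 'w::ring_1) \<Rightarrow> 'v \<Rightarrow> quat set" where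
  "S_spec_Phi0 lm A v = {q. Rq lm q v \<notin> Phi0 A}"

end

theory Submission
  imports Defs
begin

text \<open>For b = a^-1 and q \<noteq> 0 one has the factorisation
  R_q(b) = |q|^2 R_{q'}(a) b^2 with q' = conj(q) / |q|^2, where the outer factors are invertible.
  Both Phi_A and Phi0_A contain the invertible elements and are stable under two-sided
  multiplication by them, so R_q(b) and R_{q'}(a) lie in them simultaneously. The point q = 0
  belongs to neither spectrum, as R_0(v) = v^2 is invertible, and q \<mapsto> q' is an involution.\<close>

lemma qnorm_power2: "(qnorm q)\<^sup>2 = (qRe q)\<^sup>2 + (qI q)\<^sup>2 + (qJ q)\<^sup>2 + (qK q)\<^sup>2"
  unfolding qnorm_def by (simp add: add_nonneg_nonneg)

lemma qnorm_eq_0_iff: "qnorm q = 0 \<longleftrightarrow> q = Quat 0 0 0 0"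
proof -
  have "(qnorm q)\<^sup>2 = 0 \<longleftrightarrow> q = Quat 0 0 0 0"
    unfolding qnorm_power2 by (cases q) (auto simp: add_nonneg_eq_0_iff)
  then show ?thesis by simp
qed

lemma qRe_qconj_div_normsq: "qRe (qconj_div_normsq q) = qRe q / (qnorm q)\<^sup>2"
  by (simp add: qconj_div_normsq_def Let_def)

lemma qnorm_qconj_div_normsq: "(qnorm (qconj_div_normsq q))\<^sup>2 = 1 / (qnorm q)\<^sup>2"
proof (cases "qnorm q = 0")
  case True
  then show ?thesis by (simp add: qconj_div_normsq_def qnorm_power2)
next
  case False
  have "(qnorm (qconj_div_normsq q))\<^sup>2
      = ((qRe q)\<^sup>2 + (qI q)\<^sup>2 + (qJ q)\<^sup>2 + (qK q)\<^sup>2) / ((qnorm q)\<^sup>2)\<^sup>2"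
    unfolding qconj_div_normsq_def Let_def qnorm_power2[of "Quat _ _ _ _"]
    by (simp add: power_divide add_divide_distrib)
  also have "\<dots> = (qnorm q)\<^sup>2 / ((qnorm q)\<^sup>2)\<^sup>2"
    by (simp only: qnorm_power2)
  also have "\<dots> = 1 / (qnorm q)\<^sup>2"
    using False by (simp add: power2_eq_square)
  finally show ?thesis .
qed

text \<open>Since x / 0 = 0, the map fixes q = 0 and is thus an involution of all of quat.\<close>
lemma qconj_div_normsq_involutive: "qconj_div_normsq (qconj_div_normsq q) = q"
proof (cases "qnorm q = 0")
  case True
  then show ?thesis by (simp add: qnorm_eq_0_iff qconj_div_normsq_def)
next
  case False
  then show ?thesis
    unfolding qconj_div_normsq_def[of "qconj_div_normsq q"] qnorm_qconj_div_normsq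
    by (cases q) (simp add: qconj_div_normsq_def Let_def)
qed

lemma image_qconj_div_normsq: "qconj_div_normsq ` S = {q. qconj_div_normsq q \<in> S}"
  by (auto simp: qconj_div_normsq_involutive) (metis imageI qconj_div_normsq_involutive)

lemma invertiblesI: "x * y = 1 \<Longrightarrow> y * x = 1 \<Longrightarrow> x \<in> invertibles"
  unfolding invertibles_def by blast

lemma invertibles_mult:
  assumes "x \<in> invertibles" "y \<in> invertibles"
  shows "x * y \<in> invertibles"
proof -
  obtain x' where x': "x * x' = 1" "x' * x = 1" using assms(1) by (auto simp: invertibles_def)
  obtain y' where y': "y * y' = 1" "y' * y = 1" using assms(2) by (auto simp: invertibles_def)
  have "(x * y) * (y' * x') = 1" "(y' * x') * (x * y) = 1"
    by (simp_all add: mult.assoc flip: mult.assoc[of y] mult.assoc[of x'] add: x' y')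
  then show ?thesis by (rule invertiblesI)
qed

lemma ring_inv:
  assumes "x \<in> invertibles"
  shows "x * ring_inv x = 1" "ring_inv x * x = 1"
proof -
  obtain y where y: "x * y = 1" "y * x = 1" using assms by (auto simp: invertibles_def)
  have "z = y" if "x * z = 1" for z
    by (metis that y(2) mult.assoc mult_1_left mult_1_right)
  then have "ring_inv x = y"
    unfolding ring_inv_def using y by blast
  with y show "x * ring_inv x = 1" "ring_inv x * x = 1" by simp_all
qed

lemma ring_inv_invertible: "x \<in> invertibles \<Longrightarrow> ring_inv x \<in> invertibles"
  using ring_inv invertiblesI by metis

lemma invertible_sandwich_iff:
  assumes closed: "\<And>u w x. u \<in> invertibles \<Longrightarrow> w \<in> invertibles \<Longrightarrow> x \<in> P \<Longrightarrow> u * x * w \<in> P"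
    and u: "u \<in> invertibles" and w: "w \<in> invertibles"
  shows "u * x * w \<in> P \<longleftrightarrow> x \<in> P"
proof
  assume "u * x * w \<in> P"
  then have "ring_inv u * (u * x * w) * ring_inv w \<in> P"
    using closed ring_inv_invertible u w by blast
  moreover have "ring_inv u * (u * x * w) * ring_inv w = x"
    using ring_inv[OF u] ring_inv[OF w] by (simp add: mult.assoc flip: mult.assoc[of "ring_inv u"])
  ultimately show "x \<in> P" by simp
qed (use closed u w in blast)

lemma invertibles_image:
  assumes "\<And>x y. A (x * y) = A x * A y" "A 1 = 1" "u \<in> invertibles"
  shows "A u \<in> invertibles"
  using assms by (metis ring_inv invertiblesI)

lemma Phi_mult_closed:
  assumes "\<And>x y. A (x * y) = A x * A y" "A 1 = 1"
    and "u \<in> invertibles" "w \<in> invertibles" "x \<in> Phi A"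
  shows "u * x * w \<in> Phi A"
  using assms invertibles_image[of A] unfolding Phi_def by (simp add: invertibles_mult)

lemma Phi0_mult_closed:
  assumes "\<And>x y. A (x * y) = A x * A y"
    and "u \<in> invertibles" "w \<in> invertibles" "x \<in> Phi0 A"
  shows "u * x * w \<in> Phi0 A"
proof -
  obtain v k where x: "x = v + k" "v \<in> invertibles" "A k = 0"
    using assms(4) by (auto simp: Phi0_def)
  have "u * x * w = u * v * w + u * k * w" by (simp add: x algebra_simps)
  moreover have "u * v * w \<in> invertibles" using invertibles_mult assms(2,3) x(2) by blast
  moreover have "A (u * k * w) = 0" using assms(1) x(3) by simp
  ultimately show ?thesis unfolding Phi0_def by blast
qed

lemma invertibles_subset_Phi:
  "(\<And>x y. A (x * y) = A x * A y) \<Longrightarrow> A 1 = 1 \<Longrightarrow> invertibles \<subseteq> Phi A"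
  using invertibles_image[of A] unfolding Phi_def by blast

lemma invertibles_subset_Phi0: "A 0 = 0 \<Longrightarrow> invertibles \<subseteq> Phi0 A"
  unfolding Phi0_def by force

text \<open>Multiplication by real scalars: the only part of the Banach algebra structure
  that the factorisation of R_q(a^-1) needs.\<close>
locale real_scaling =
  fixes scale :: "real \<Rightarrow> 'v::ring_1 \<Rightarrow> 'v"
  assumes scale_right_distrib: "scale r (x + y) = scale r x + scale r y"
    and scale_left_distrib: "scale (r + s) x = scale r x + scale s x"
    and scale_scale: "scale r (scale s x) = scale (r * s) x"
    and scale_one: "scale 1 x = x"
    and scale_mult_left: "scale r x * y = scale r (x * y)"
begin

lemma scale_zero_left: "scale 0 x = 0"
  using scale_left_distrib[of 0 0 x] by simp

lemma scale_right_diff_distrib: "scale r (x - y) = scale r x - scale r y"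
  using scale_right_distrib[of r "x - y" y] by (simp add: eq_diff_eq)

lemma scale_one_invertible: "c \<noteq> 0 \<Longrightarrow> scale c 1 \<in> invertibles"
  by (rule invertiblesI[of _ "scale (1 / c) 1"]) (simp_all add: scale_mult_left scale_scale scale_one)

lemma quadratic_right_inverse:
  assumes ab: "a * b = 1" and c: "c \<noteq> 0"
  shows "b * b - scale (2 * t) b + scale c 1
       = scale c 1 * (a * a - scale (2 * (t / c)) a + scale (1 / c) 1) * (b * b)"
proof -
  have "a * a * (b * b) = 1" "a * (b * b) = b"
    using ab by (simp_all add: mult.assoc flip: mult.assoc[of a b])
  then have "(a * a - scale (2 * (t / c)) a + scale (1 / c) 1) * (b * b)
      = 1 - scale (2 * (t / c)) b + scale (1 / c) (b * b)"
    by (simp add: algebra_simps scale_mult_left)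
  then have "scale c 1 * (a * a - scale (2 * (t / c)) a + scale (1 / c) 1) * (b * b)
      = scale c (1 - scale (2 * (t / c)) b + scale (1 / c) (b * b))"
    by (simp add: mult.assoc scale_mult_left)
  also have "\<dots> = scale c 1 - scale (2 * t) b + b * b"
    using c by (simp add: scale_right_distrib scale_right_diff_distrib scale_scale scale_one)
  finally show ?thesis by simp
qed

end

lemma qadd_qreal: "qadd (qreal r) (qreal s) = qreal (r + s)"
  by (simp add: qadd_def qreal_def)

lemma qmult_qreal: "qmult (qreal r) (qreal s) = qreal (r * s)"
  by (simp add: qmult_def qreal_def)

lemma qbanach_algebra_real_scaling:
  "qbanach_algebra lm rm nm \<Longrightarrow> real_scaling (\<lambda>r. lm (qreal r))"
  unfolding qbanach_algebra_def
  by unfold_locales (simp_all flip: qadd_qreal qmult_qreal)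

lemma Rq_zero:
  assumes "real_scaling (\<lambda>r. lm (qreal r))"
  shows "Rq lm (Quat 0 0 0 0) v = v * v"
  using real_scaling.scale_zero_left[OF assms] by (simp add: Rq_def qnorm_def)

lemma Rq_ring_inv:
  assumes "real_scaling (\<lambda>r. lm (qreal r))" and "a * b = 1" and "q \<noteq> Quat 0 0 0 0"
  shows "Rq lm q b = lm (qreal ((qnorm q)\<^sup>2)) 1 * Rq lm (qconj_div_normsq q) a * (b * b)"
  using real_scaling.quadratic_right_inverse[OF assms(1,2), of "(qnorm q)\<^sup>2" "qRe q"] assms(3)
  by (simp add: Rq_def qRe_qconj_div_normsq qnorm_qconj_div_normsq qnorm_eq_0_iff)

lemma S_spectrum_ring_inv:
  assumes scaling: "real_scaling (\<lambda>r. lm (qreal r))" and a: "a \<in> invertibles"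
    and "invertibles \<subseteq> P"
    and closed: "\<And>u w x. u \<in> invertibles \<Longrightarrow> w \<in> invertibles \<Longrightarrow> x \<in> P \<Longrightarrow> u * x * w \<in> P"
  shows "{q. Rq lm q (ring_inv a) \<notin> P} = qconj_div_normsq ` {q. Rq lm q a \<notin> P}"
proof -
  let ?b = "ring_inv a"
  have "Rq lm q ?b \<in> P \<longleftrightarrow> Rq lm (qconj_div_normsq q) a \<in> P" for q
  proof (cases "q = Quat 0 0 0 0")
    case True
    have "a * a \<in> P" "?b * ?b \<in> P"
      using a ring_inv_invertible invertibles_mult \<open>invertibles \<subseteq> P\<close> by blast+
    moreover have "qconj_div_normsq q = q"
      using True by (simp add: qconj_div_normsq_def)
    ultimately show ?thesis
      using True by (simp add: Rq_zero[OF scaling])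
  next
    case False
    have "(qnorm q)\<^sup>2 \<noteq> 0"
      using False by (simp add: qnorm_eq_0_iff)
    then have "lm (qreal ((qnorm q)\<^sup>2)) 1 \<in> invertibles"
      using real_scaling.scale_one_invertible[OF scaling] by blast
    moreover have "?b * ?b \<in> invertibles"
      using a ring_inv_invertible invertibles_mult by blast
    ultimately show ?thesis
      using Rq_ring_inv[OF scaling ring_inv(1)[OF a] False] invertible_sandwich_iff[OF closed]
      by simp
  qed
  then show ?thesis
    unfolding image_qconj_div_normsq by simp
qed

theorem mainTheorem2:
  fixes lV :: "quat \<Rightarrow> 'v::ring_1 \<Rightarrow> 'v" and rV :: "'v \<Rightarrow> quat \<Rightarrow> 'v"
    and nV :: "'v \<Rightarrow> real"
    and lW :: "quat \<Rightarrow> 'w::ring_1 \<Rightarrow> 'w" and rW :: "'w \<Rightarrow> quat \<Rightarrow> 'w"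
    and nW :: "'w \<Rightarrow> real"
    and A :: "'v \<Rightarrow> 'w" and a :: 'v
  assumes "qbanach_algebra lV rV nV"
    and "qbanach_algebra lW rW nW"
    and "qhom lV rV lW rW A"
    and "a \<in> invertibles"
  shows "S_spec_Phi lV A (ring_inv a) = qconj_div_normsq ` S_spec_Phi lV A a
       \<and> S_spec_Phi0 lV A (ring_inv a) = qconj_div_normsq ` S_spec_Phi0 lV A a"
proof -
  note scaling = qbanach_algebra_real_scaling[OF assms(1)]
  have mult: "\<And>x y. A (x * y) = A x * A y" and one: "A 1 = 1" and zero: "A 0 = 0"
    using assms(3) unfolding qhom_def by (metis add_cancel_right_right add_0)+
  have "S_spec_Phi lV A (ring_inv a) = qconj_div_normsq ` S_spec_Phi lV A a"
    unfolding S_spec_Phi_def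
    using S_spectrum_ring_inv[OF scaling assms(4) invertibles_subset_Phi[OF mult one]]
      Phi_mult_closed[OF mult one] by blast
  moreover have "S_spec_Phi0 lV A (ring_inv a) = qconj_div_normsq ` S_spec_Phi0 lV A a"
    unfolding S_spec_Phi0_def
    using S_spectrum_ring_inv[OF scaling assms(4) invertibles_subset_Phi0[of A, OF zero]]
      Phi0_mult_closed[OF mult] by blast
  ultimately show ?thesis ..
qed

end
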